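(* Let $G\ge 2$ and $p_t\in(0,1)$. Let $r_{t,1},\dots,r_{t,G}$ be i.i.d. $\mathrm{Bernoulli}(p_t)$, $R=\sum_j r_{t,j}$, $\hat p_t=R/G$, $\hat A_{t,i}=r_{t,i}-\hat p_t$, $A_{t,i}=r_{t,i}-p_t$, $\mathcal S=\{1\le R\le G-1\}$, and fix $i\in[G]$. (a) If $p_t<1/2$, then for every $\epsilon\in\bigl(0,\ \mathbb E[\hat p_t\mid\mathcal S]-p_t\bigr)$, \[ \mathbb P\!\left(A_{t,i}-\hat A_{t,i}>\epsilon\mid\mathcal S\right)=\frac{\sum_{k=\lfloor G(p_t+\epsilon)\rfloor+1}^{G-1}\binom{G}{k}p_t^k(1-p_t)^{G-k}}{1-(1-p_t)^G-p_t^G}. \] (b) If $p_t>1/2$, then for every $\epsilon\in\bigl(0,\ p_t-\mathbb E[\hat p_t\mid\mathcal S]\bigr)$, \[ \mathbb P\!\left(\hat A_{t,i}-A_{t,i}>\epsilon\mid\mathcal S\right)=\frac{\sum_{k=1}^{\lceil G(p_t-\epsilon)\rceil-1}\binom{G}{k}p_t^k(1-p_t)^{G-k}}{1-(1-p_t)^G-p_t^G}. \]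
   Context: Binary-reward group setting: $G$ i.i.d. Bernoulli$(p_t)$ rewards for one prompt, group baseline $\hat p_t$, group-relative advantage $\hat A_{t,i}$, expected advantage $A_{t,i}$, and non-degenerate event $\mathcal S$. A prompt with $p_t<1/2$ is called hard and one with $p_t>1/2$ easy. *)

theory Defs
  imports "HOL-Probability.Probability"
begin

text \<open>Group of G i.i.d. Bernoulli(p) rewards r_1..r_G, indexed 0..G-1.
  An outcome is a function omega :: nat => bool (True = reward 1).\<close>
definition bern_group :: "nat \<Rightarrow> real \<Rightarrow> (nat \<Rightarrow> bool) pmf" where
  "bern_group G p = Pi_pmf {..<G} False (\<lambda>_. bernoulli_pmf p)"

definition rew :: "(nat \<Rightarrow> bool) \<Rightarrow> nat \<Rightarrow> real" where
  "rew \<omega> j = (if \<omega> j then 1 else 0)"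

definition Rtot :: "nat \<Rightarrow> (nat \<Rightarrow> bool) \<Rightarrow> real" where
  "Rtot G \<omega> = (\<Sum>j<G. rew \<omega> j)"

definition phat :: "nat \<Rightarrow> (nat \<Rightarrow> bool) \<Rightarrow> real" where
  "phat G \<omega> = Rtot G \<omega> / real G"

definition Ahat :: "nat \<Rightarrow> nat \<Rightarrow> (nat \<Rightarrow> bool) \<Rightarrow> real" where
  "Ahat G i \<omega> = rew \<omega> i - phat G \<omega>"

definition Aexp :: "real \<Rightarrow> nat \<Rightarrow> (nat \<Rightarrow> bool) \<Rightarrow> real" where
  "Aexp p i \<omega> = rew \<omega> i - p"

definition Sev :: "nat \<Rightarrow> (nat \<Rightarrow> bool) set" where
  "Sev G = {\<omega>. 1 \<le> Rtot G \<omega> \<and> Rtot G \<omega> \<le> real G - 1}"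

definition cprob :: "'a pmf \<Rightarrow> ('a \<Rightarrow> bool) \<Rightarrow> 'a set \<Rightarrow> real" where
  "cprob M P S = measure_pmf.prob M ({x. P x} \<inter> S) / measure_pmf.prob M S"

definition cond_expect :: "'a pmf \<Rightarrow> ('a \<Rightarrow> real) \<Rightarrow> 'a set \<Rightarrow> real" where
  "cond_expect M f S = measure_pmf.expectation M (\<lambda>x. f x * indicator S x) / measure_pmf.prob M S"

end

(* The two advantage gaps are phat - p and p - phat, independently of i, so each event is a
   threshold event for the number R of successes, which is Binomial(G, p). Conditioning on
   S = {1 <= R <= G - 1} restricts the binomial sum to 1 <= k <= G - 1 and divides it by
   P(S) = 1 - (1 - p)^G - p^G; the real thresholds G (p + eps) and G (p - eps) on the integer R
   turn into the floor and ceiling bounds of the summation range. *)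
theory Submission
  imports Defs
begin

definition num_successes :: "nat \<Rightarrow> (nat \<Rightarrow> bool) \<Rightarrow> nat" where
  "num_successes G \<omega> = card {j\<in>{..<G}. \<omega> j}"

lemma Rtot_eq_num_successes: "Rtot G \<omega> = real (num_successes G \<omega>)"
proof -
  have "(\<Sum>j<G. rew \<omega> j) = (\<Sum>j\<in>{j\<in>{..<G}. \<omega> j}. 1)"
    by (intro sum.mono_neutral_cong_right) (auto simp: rew_def)
  then show ?thesis
    by (simp add: Rtot_def num_successes_def)
qed

lemma Sev_eq_num_successes:
  "Sev G = {\<omega>. 1 \<le> num_successes G \<omega> \<and> num_successes G \<omega> \<le> G - 1}"
  by (cases G) (auto simp: Sev_def Rtot_eq_num_successes)

lemma binomial_pmf_eq_map_num_successes:
  assumes "0 \<le> p" "p \<le> 1"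
  shows "binomial_pmf G p = map_pmf (num_successes G) (bern_group G p)"
  unfolding bern_group_def num_successes_def
  by (rule binomial_pmf_altdef') (use assms in auto)

lemma prob_bern_group_num_successes:
  assumes "0 \<le> p" "p \<le> 1"
  shows "measure_pmf.prob (bern_group G p) {\<omega>. Q (num_successes G \<omega>)}
       = (\<Sum>k\<in>{k. k \<le> G \<and> Q k}. real (G choose k) * p ^ k * (1 - p) ^ (G - k))"
proof -
  have "measure_pmf.prob (bern_group G p) {\<omega>. Q (num_successes G \<omega>)}
      = measure_pmf.prob (binomial_pmf G p) {k. Q k}"
    by (simp add: binomial_pmf_eq_map_num_successes[OF assms])
  also have "\<dots> = measure_pmf.prob (binomial_pmf G p) {k. k \<le> G \<and> Q k}"
    using assms by (intro measure_prob_cong_0) (auto simp: set_pmf_binomial_eq)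
  also have "\<dots> = (\<Sum>k\<in>{k. k \<le> G \<and> Q k}. pmf (binomial_pmf G p) k)"
    by (rule measure_measure_pmf_finite) auto
  also have "\<dots> = (\<Sum>k\<in>{k. k \<le> G \<and> Q k}. real (G choose k) * p ^ k * (1 - p) ^ (G - k))"
    using assms by (intro sum.cong) auto
  finally show ?thesis .
qed

lemma prob_Sev:
  assumes "0 \<le> p" "p \<le> 1" "1 \<le> G"
  shows "measure_pmf.prob (bern_group G p) (Sev G) = 1 - (1 - p) ^ G - p ^ G"
proof -
  define f where "f k = real (G choose k) * p ^ k * (1 - p) ^ (G - k)" for k
  obtain m where m: "G = Suc m" using assms(3) by (cases G) auto
  have "1 = (\<Sum>k\<le>G. f k)"
    using binomial_ring[of p "1 - p" G] by (simp add: f_def)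
  also have "\<dots> = f 0 + (\<Sum>k\<in>{1..G-1}. f k) + f G"
    unfolding m by (simp add: sum.atMost_Suc atMost_atLeast0 sum.atLeast_Suc_atMost)
  finally have "(\<Sum>k\<in>{1..G-1}. f k) = 1 - (1 - p) ^ G - p ^ G"
    by (simp add: f_def)
  moreover have "{k. k \<le> G \<and> 1 \<le> k \<and> k \<le> G - 1} = {1..G-1}"
    by auto
  ultimately show ?thesis
    using prob_bern_group_num_successes[OF assms(1,2), of G "\<lambda>k. 1 \<le> k \<and> k \<le> G - 1"]
    by (simp add: Sev_eq_num_successes f_def)
qed

lemma cprob_Sev_num_successes:
  assumes "0 \<le> p" "p \<le> 1" "1 \<le> G"
  shows "cprob (bern_group G p) (\<lambda>\<omega>. Q (num_successes G \<omega>)) (Sev G)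
       = (\<Sum>k\<in>{k. 1 \<le> k \<and> k \<le> G - 1 \<and> Q k}. real (G choose k) * p ^ k * (1 - p) ^ (G - k))
         / (1 - (1 - p) ^ G - p ^ G)"
proof -
  let ?Q' = "\<lambda>k. 1 \<le> k \<and> k \<le> G - 1 \<and> Q k"
  have "{\<omega>. Q (num_successes G \<omega>)} \<inter> Sev G = {\<omega>. ?Q' (num_successes G \<omega>)}"
    by (auto simp: Sev_eq_num_successes)
  moreover have "{k. k \<le> G \<and> ?Q' k} = {k. ?Q' k}"
    by auto
  ultimately show ?thesis
    unfolding cprob_def prob_Sev[OF assms]
    using prob_bern_group_num_successes[OF assms(1,2), of G ?Q'] by simp
qed

lemma Aexp_minus_Ahat: "Aexp p i \<omega> - Ahat G i \<omega> = phat G \<omega> - p"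
  by (simp add: Aexp_def Ahat_def)

lemma Ahat_minus_Aexp: "Ahat G i \<omega> - Aexp p i \<omega> = p - phat G \<omega>"
  by (simp add: Aexp_def Ahat_def)

lemma less_phat_iff: "0 < G \<Longrightarrow> c < phat G \<omega> \<longleftrightarrow> real G * c < real (num_successes G \<omega>)"
  by (simp add: phat_def Rtot_eq_num_successes pos_less_divide_eq mult.commute)

lemma phat_less_iff: "0 < G \<Longrightarrow> phat G \<omega> < c \<longleftrightarrow> real (num_successes G \<omega>) < real G * c"
  by (simp add: phat_def Rtot_eq_num_successes pos_divide_less_eq mult.commute)

lemma Collect_nat_greater_real_eq:
  assumes "0 \<le> x"
  shows "{k::nat. 1 \<le> k \<and> k \<le> n \<and> x < real k} = {nat \<lfloor>x\<rfloor> + 1..n}"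
proof -
  have "x < real k \<longleftrightarrow> nat \<lfloor>x\<rfloor> < k" for k
    using assms by (simp add: floor_less_iff nat_less_iff)
  then show ?thesis
    by (intro set_eqI) (simp only: mem_Collect_eq atLeastAtMost_iff; linarith)
qed

lemma Collect_nat_less_real_eq:
  assumes "x \<le> real G"
  shows "{k::nat. 1 \<le> k \<and> k \<le> G - 1 \<and> real k < x} = {1..nat \<lceil>x\<rceil> - 1}"
proof -
  have "real k < x \<longleftrightarrow> k < nat \<lceil>x\<rceil>" for k
    using nat_ceiling_le_eq[of x k] by linarith
  moreover have "nat \<lceil>x\<rceil> \<le> G"
    using assms by simp
  ultimately show ?thesis
    by (intro set_eqI) (simp only: mem_Collect_eq atLeastAtMost_iff; linarith)
qed

lemma cprob_Aexp_minus_Ahat_greater: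
  assumes "0 \<le> p" "p \<le> 1" "1 \<le> G" "0 \<le> p + \<epsilon>"
  shows "cprob (bern_group G p) (\<lambda>\<omega>. Aexp p i \<omega> - Ahat G i \<omega> > \<epsilon>) (Sev G) =
         (\<Sum>k = nat \<lfloor>real G * (p + \<epsilon>)\<rfloor> + 1 .. G - 1. real (G choose k) * p ^ k * (1 - p) ^ (G - k))
           / (1 - (1 - p) ^ G - p ^ G)"
proof -
  have "(\<lambda>\<omega>. \<epsilon> < Aexp p i \<omega> - Ahat G i \<omega>)
      = (\<lambda>\<omega>. real G * (p + \<epsilon>) < real (num_successes G \<omega>))"
    using assms(3) by (simp add: Aexp_minus_Ahat less_diff_eq add.commute less_phat_iff)
  moreover have "0 \<le> real G * (p + \<epsilon>)"
    using assms(4) by simp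
  ultimately show ?thesis
    using cprob_Sev_num_successes[OF assms(1-3), of "\<lambda>k. real G * (p + \<epsilon>) < real k"]
      Collect_nat_greater_real_eq[of "real G * (p + \<epsilon>)" "G - 1"]
    by simp
qed

lemma cprob_Ahat_minus_Aexp_greater:
  assumes "0 \<le> p" "p \<le> 1" "1 \<le> G" "p - \<epsilon> \<le> 1"
  shows "cprob (bern_group G p) (\<lambda>\<omega>. Ahat G i \<omega> - Aexp p i \<omega> > \<epsilon>) (Sev G) =
         (\<Sum>k = 1 .. nat \<lceil>real G * (p - \<epsilon>)\<rceil> - 1. real (G choose k) * p ^ k * (1 - p) ^ (G - k))
           / (1 - (1 - p) ^ G - p ^ G)"
proof -
  have "(\<lambda>\<omega>. \<epsilon> < Ahat G i \<omega> - Aexp p i \<omega>)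
      = (\<lambda>\<omega>. real (num_successes G \<omega>) < real G * (p - \<epsilon>))"
    using assms(3) by (simp add: Ahat_minus_Aexp less_diff_eq add.commute flip: phat_less_iff)
  moreover have "real G * (p - \<epsilon>) \<le> real G"
    using assms(4) by (simp add: mult_left_le)
  ultimately show ?thesis
    using cprob_Sev_num_successes[OF assms(1-3), of "\<lambda>k. real k < real G * (p - \<epsilon>)"]
      Collect_nat_less_real_eq[of "real G * (p - \<epsilon>)" G]
    by simp
qed

theorem theorem2:
  fixes G i :: nat and p :: real
  assumes "G \<ge> 2" and "0 < p" and "p < 1" and "i < G"
  shows
   "(p < 1/2 \<longrightarrow>
      (\<forall>\<epsilon>. 0 < \<epsilon> \<and> \<epsilon> < cond_expect (bern_group G p) (phat G) (Sev G) - p \<longrightarrow>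
         cprob (bern_group G p) (\<lambda>\<omega>. Aexp p i \<omega> - Ahat G i \<omega> > \<epsilon>) (Sev G) =
         (\<Sum>k = nat \<lfloor>real G * (p + \<epsilon>)\<rfloor> + 1 .. G - 1. real (G choose k) * p ^ k * (1 - p) ^ (G - k))
           / (1 - (1 - p) ^ G - p ^ G)))
    \<and> (p > 1/2 \<longrightarrow>
      (\<forall>\<epsilon>. 0 < \<epsilon> \<and> \<epsilon> < p - cond_expect (bern_group G p) (phat G) (Sev G) \<longrightarrow>
         cprob (bern_group G p) (\<lambda>\<omega>. Ahat G i \<omega> - Aexp p i \<omega> > \<epsilon>) (Sev G) =
         (\<Sum>k = 1 .. nat \<lceil>real G * (p - \<epsilon>)\<rceil> - 1. real (G choose k) * p ^ k * (1 - p) ^ (G - k))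
           / (1 - (1 - p) ^ G - p ^ G)))"
proof -
  have "0 \<le> p" "p \<le> 1" "1 \<le> G"
    using assms by auto
  then show ?thesis
    by (auto simp: cprob_Aexp_minus_Ahat_greater cprob_Ahat_minus_Aexp_greater)
qed

end
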